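(* For every $\epsilon,\alpha,D,L,A>0$ there exist $\eta,\beta>0$ such that if $X$ and $Y$ are connected graphs with degree bounded by $D$, $X$ has no $\alpha$-small $\epsilon$-Følner set and $f\colon X\to Y$ is an $(L,A)$-quasi-isometry, then $Y$ has no $\beta$-small $\eta$-Følner set.
   Context: Graphs are finite, with no multiple edges nor loops, viewed as metric spaces with the path-length metric. For $S\subseteq X$, $\partial S$ is the set of edges joining $S$ to $X\smallsetminus S$. A non-empty $S\subset X$ is an $\epsilon$-Følner set if $|S|\leq\frac12|X|$ and $|\partial S|\leq\epsilon|S|$; it is $\alpha$-small if $|S|<\alpha|X|$. An $(L,A)$-quasi-isometry is a map $f$ with $\frac1L d_X(x,x')-A\leq d_Y(f(x),f(x'))\leq L d_X(x,x')+A$ and every point of $Y$ within distance $A$ of $f(X)$. *)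

theory Defs
  imports Complex_Main
begin

definition fin_graph :: "'a set \<Rightarrow> ('a \<Rightarrow> 'a \<Rightarrow> bool) \<Rightarrow> bool" where
  "fin_graph V E \<longleftrightarrow> finite V \<and> (\<forall>x y. E x y \<longrightarrow> x \<in> V \<and> y \<in> V)
     \<and> (\<forall>x y. E x y \<longrightarrow> E y x) \<and> (\<forall>x. \<not> E x x)"

definition walk :: "('a \<Rightarrow> 'a \<Rightarrow> bool) \<Rightarrow> 'a list \<Rightarrow> bool" where
  "walk E p \<longleftrightarrow> p \<noteq> [] \<and> (\<forall>i. Suc i < length p \<longrightarrow> E (p ! i) (p ! Suc i))"

definition connected_graph :: "'a set \<Rightarrow> ('a \<Rightarrow> 'a \<Rightarrow> bool) \<Rightarrow> bool" where
  "connected_graph V E \<longleftrightarrow> fin_graph V E \<and> V \<noteq> {} \<and>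
     (\<forall>x\<in>V. \<forall>y\<in>V. \<exists>p. walk E p \<and> hd p = x \<and> last p = y)"

definition gdist :: "('a \<Rightarrow> 'a \<Rightarrow> bool) \<Rightarrow> 'a \<Rightarrow> 'a \<Rightarrow> real" where
  "gdist E x y = real (LEAST n. \<exists>p. walk E p \<and> hd p = x \<and> last p = y \<and> length p = Suc n)"

definition degree_bounded :: "'a set \<Rightarrow> ('a \<Rightarrow> 'a \<Rightarrow> bool) \<Rightarrow> real \<Rightarrow> bool" where
  "degree_bounded V E D \<longleftrightarrow> (\<forall>x\<in>V. real (card {y. E x y}) \<le> D)"

definition edge_boundary :: "'a set \<Rightarrow> ('a \<Rightarrow> 'a \<Rightarrow> bool) \<Rightarrow> 'a set \<Rightarrow> ('a \<times> 'a) set" where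
  "edge_boundary V E S = {(x, y). x \<in> S \<and> y \<in> V - S \<and> E x y}"

definition folner_set :: "'a set \<Rightarrow> ('a \<Rightarrow> 'a \<Rightarrow> bool) \<Rightarrow> real \<Rightarrow> 'a set \<Rightarrow> bool" where
  "folner_set V E \<epsilon> S \<longleftrightarrow> S \<noteq> {} \<and> S \<subseteq> V \<and> real (card S) \<le> real (card V) / 2
     \<and> real (card (edge_boundary V E S)) \<le> \<epsilon> * real (card S)"

definition small_set :: "'a set \<Rightarrow> real \<Rightarrow> 'a set \<Rightarrow> bool" where
  "small_set V \<alpha> S \<longleftrightarrow> real (card S) < \<alpha> * real (card V)"

definition quasi_isometry ::
  "'a set \<Rightarrow> ('a \<Rightarrow> 'a \<Rightarrow> bool) \<Rightarrow> 'b set \<Rightarrow> ('b \<Rightarrow> 'b \<Rightarrow> bool) \<Rightarrow> real \<Rightarrow> real \<Rightarrow> ('a \<Rightarrow> 'b) \<Rightarrow> bool" where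
  "quasi_isometry V E W F L A f \<longleftrightarrow> f ` V \<subseteq> W \<and>
     (\<forall>x\<in>V. \<forall>x'\<in>V. gdist E x x' / L - A \<le> gdist F (f x) (f x')
                    \<and> gdist F (f x) (f x') \<le> L * gdist E x x' + A) \<and>
     (\<forall>y\<in>W. \<exists>x\<in>V. gdist F y (f x) \<le> A)"

end

theory Submission
  imports Defs
begin

(* Pull a small eta-Foelner set T of Y back to S = f^-1(T).  In a graph of degree at most D a
   ball of radius n has at most (D+1)^n points; this bounds the fibres of f, the size of Y
   (covered by the A-balls around f(X)), and the points of T close to its boundary.  Points
   of T at distance > A from the complement lie within A of f(S) and the others are few when
   eta is small, so |T| <= 2 (D+1)^A |S|.  An edge leaving S maps to a pair at distance
   <= L + A leaving T, so |boundary S| <= C eta |T| <= C' eta |S|.  Finally |S| is at most the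
   fibre bound times |T|, small when T is.  Hence for eta and beta small enough S is a small
   epsilon-Foelner set in X. *)

fun gball :: "('a \<Rightarrow> 'a \<Rightarrow> bool) \<Rightarrow> nat \<Rightarrow> 'a \<Rightarrow> 'a set" where
  "gball E 0 x = {x}"
| "gball E (Suc n) x = gball E n x \<union> (\<Union>u\<in>{u. E x u}. gball E n u)"

lemma gball_center: "x \<in> gball E n x"
  by (induction n) auto

lemma gball_mono: "n \<le> m \<Longrightarrow> gball E n x \<subseteq> gball E m x"
  by (induction m) (auto simp: le_Suc_eq)

lemma gball_trans: "y \<in> gball E n x \<Longrightarrow> z \<in> gball E m y \<Longrightarrow> z \<in> gball E (n + m) x"
proof (induction n arbitrary: x)
  case 0
  then show ?case by simp
next
  case (Suc n)
  show ?case
  proof (cases "y \<in> gball E n x")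
    case True
    then have "z \<in> gball E (n + m) x" using Suc by blast
    then show ?thesis using gball_mono[of "n + m" "Suc n + m"] by auto
  next
    case False
    with Suc.prems(1) obtain u where "E x u" "y \<in> gball E n u" by auto
    then show ?thesis using Suc by auto
  qed
qed

lemma gball_sym:
  assumes "symp E"
  shows "y \<in> gball E n x \<Longrightarrow> x \<in> gball E n y"
proof (induction n arbitrary: x)
  case 0
  then show ?case by simp
next
  case (Suc n)
  show ?case
  proof (cases "y \<in> gball E n x")
    case True
    then show ?thesis using Suc.IH gball_mono[of n "Suc n"] by auto
  next
    case False
    with Suc.prems obtain u where "E x u" "y \<in> gball E n u" by auto
    then have "u \<in> gball E n y" "x \<in> gball E 1 u"
      using Suc.IH assms by (auto dest: sympD)
    then show ?thesis using gball_trans by fastforce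
  qed
qed

lemma card_covered_le:
  assumes "A \<subseteq> (\<Union>i\<in>I. B i)" "finite I" "\<And>i. i \<in> I \<Longrightarrow> finite (B i)"
    and "\<And>i. i \<in> I \<Longrightarrow> real (card (B i)) \<le> c"
  shows "real (card A) \<le> real (card I) * c"
proof -
  have "card A \<le> card (\<Union>i\<in>I. B i)"
    using assms(1-3) by (simp add: card_mono)
  also have "\<dots> \<le> (\<Sum>i\<in>I. card (B i))"
    using assms(2) by (rule card_UN_le)
  finally have "real (card A) \<le> (\<Sum>i\<in>I. real (card (B i)))"
    by (metis of_nat_le_iff of_nat_sum)
  also have "\<dots> \<le> (\<Sum>i\<in>I. c)"
    using assms(4) by (rule sum_mono)
  finally show ?thesis by simp
qed

lemma finite_neighbours: "fin_graph V E \<Longrightarrow> finite {y. E x y}"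
  unfolding fin_graph_def by (auto intro: finite_subset)

lemma card_neighbours_le:
  assumes "fin_graph V E" "degree_bounded V E D" "0 \<le> D"
  shows "real (card {y. E x y}) \<le> D"
proof (cases "x \<in> V")
  case False
  then have "{y. E x y} = {}" using assms(1) unfolding fin_graph_def by auto
  then show ?thesis using assms(3) by simp
qed (use assms(2) in \<open>auto simp: degree_bounded_def\<close>)

lemma finite_gball: "fin_graph V E \<Longrightarrow> finite (gball E n x)"
  by (induction n arbitrary: x) (auto simp: finite_neighbours)

lemma card_gball_le:
  assumes "fin_graph V E" "degree_bounded V E D" "0 \<le> D"
  shows "real (card (gball E n x)) \<le> (D + 1) ^ n"
proof (induction n arbitrary: x)
  case 0
  then show ?case by simp
next
  case (Suc n)
  let ?N = "{u. E x u}"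
  have "real (card (\<Union>u\<in>?N. gball E n u)) \<le> real (card ?N) * (D + 1) ^ n"
    using Suc.IH finite_gball[OF assms(1)] finite_neighbours[OF assms(1)]
    by (intro card_covered_le) auto
  also have "\<dots> \<le> D * (D + 1) ^ n"
    using card_neighbours_le[OF assms] assms(3) by (intro mult_right_mono) auto
  finally have "real (card (gball E (Suc n) x)) \<le> (D + 1) ^ n + D * (D + 1) ^ n"
    using Suc.IH[of x] card_Un_le[of "gball E n x" "\<Union>u\<in>?N. gball E n u"] by simp
  then show ?case by (simp add: algebra_simps)
qed

lemma walk_last_in_gball: "walk E p \<Longrightarrow> length p = Suc k \<Longrightarrow> last p \<in> gball E k (hd p)"
proof (induction p arbitrary: k)
  case Nil
  then show ?case by simp
next
  case (Cons a q)
  show ?case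
  proof (cases q)
    case Nil
    then show ?thesis using Cons.prems by (simp add: gball_center)
  next
    case (Cons b r)
    with Cons.prems obtain k' where k: "k = Suc k'" by (cases k) auto
    have "E a b" "walk E q"
      using Cons.prems(1) \<open>q = b # r\<close> unfolding walk_def
      by (auto dest: spec[of _ 0] spec[of _ "Suc _"])
    then show ?thesis using Cons.IH Cons.prems(2) k \<open>q = b # r\<close> by auto
  qed
qed

lemma gdist_le_imp_in_gball:
  assumes "connected_graph V E" "x \<in> V" "y \<in> V" "gdist E x y \<le> c"
  shows "y \<in> gball E (nat \<lfloor>c\<rfloor>) x"
proof -
  let ?P = "\<lambda>n. \<exists>p. walk E p \<and> hd p = x \<and> last p = y \<and> length p = Suc n"
  obtain p where p: "walk E p" "hd p = x" "last p = y"
    using assms(1-3) unfolding connected_graph_def by blast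
  then have "length p = Suc (length p - 1)"
    by (cases p) (auto simp: walk_def)
  with p have "?P (length p - 1)" by blast
  then have "?P (Least ?P)" by (rule LeastI)
  then obtain q where q: "walk E q" "hd q = x" "last q = y" "length q = Suc (Least ?P)"
    by blast
  have "real (Least ?P) \<le> c"
    using assms(4) unfolding gdist_def .
  then have "int (Least ?P) \<le> \<lfloor>c\<rfloor>"
    by (simp add: le_floor_iff)
  then have "gball E (Least ?P) x \<subseteq> gball E (nat \<lfloor>c\<rfloor>) x"
    by (intro gball_mono) linarith
  moreover have "y \<in> gball E (Least ?P) x"
    using walk_last_in_gball[OF q(1) q(4)] q(2,3) by simp
  ultimately show ?thesis
    by blast
qed

lemma gdist_self: "gdist E x x = 0"
proof -
  have "walk E [x]" by (simp add: walk_def)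
  then have "(LEAST n. \<exists>p. walk E p \<and> hd p = x \<and> last p = x \<and> length p = Suc n) = 0"
    by (intro Least_eq_0) force
  then show ?thesis unfolding gdist_def by simp
qed

lemma gdist_le_1_if_edge: "E x y \<Longrightarrow> gdist E x y \<le> 1"
proof -
  assume "E x y"
  then have "walk E [x, y]" by (auto simp: walk_def less_Suc_eq)
  then have "(LEAST n. \<exists>p. walk E p \<and> hd p = x \<and> last p = y \<and> length p = Suc n) \<le> 1"
    by (intro Least_le) force
  then show ?thesis unfolding gdist_def by simp
qed

definition boundary_layer :: "'a set \<Rightarrow> ('a \<Rightarrow> 'a \<Rightarrow> bool) \<Rightarrow> nat \<Rightarrow> 'a set \<Rightarrow> 'a set" where
  "boundary_layer V E n T = {y \<in> T. \<exists>z \<in> V - T. z \<in> gball E n y}"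

lemma near_complement_imp_near_edge_boundary:
  assumes "fin_graph V E"
  shows "y \<in> T \<Longrightarrow> z \<in> gball E n y \<Longrightarrow> z \<notin> T \<Longrightarrow>
    \<exists>u \<in> fst ` edge_boundary V E T. y \<in> gball E n u"
proof (induction n arbitrary: y)
  case 0
  then show ?case by simp
next
  case (Suc n)
  show ?case
  proof (cases "z \<in> gball E n y")
    case True
    then obtain u where "u \<in> fst ` edge_boundary V E T" "y \<in> gball E n u"
      using Suc.IH Suc.prems(1,3) by blast
    then show ?thesis using gball_mono[of n "Suc n" E u] by auto
  next
    case False
    with Suc.prems obtain w where w: "E y w" "z \<in> gball E n w" by auto
    show ?thesis
    proof (cases "w \<in> T")
      case True
      then obtain u where "u \<in> fst ` edge_boundary V E T" "w \<in> gball E n u"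
        using Suc.IH w(2) Suc.prems(3) by blast
      moreover have "y \<in> gball E 1 w"
        using w(1) assms unfolding fin_graph_def by auto
      ultimately show ?thesis using gball_trans by fastforce
    next
      case False
      then have "(y, w) \<in> edge_boundary V E T"
        using w(1) Suc.prems(1) assms unfolding edge_boundary_def fin_graph_def by auto
      then show ?thesis using gball_center by force
    qed
  qed
qed

lemma finite_edge_boundary: "fin_graph V E \<Longrightarrow> finite (edge_boundary V E T)"
  unfolding fin_graph_def edge_boundary_def
  by (rule finite_subset[of _ "V \<times> V"]) auto

lemma card_boundary_layer_le:
  assumes "fin_graph V E" "degree_bounded V E D" "0 \<le> D"
  shows "real (card (boundary_layer V E n T)) \<le> real (card (edge_boundary V E T)) * (D + 1) ^ n"
proof -
  have "boundary_layer V E n T \<subseteq> (\<Union>u \<in> fst ` edge_boundary V E T. gball E n u)"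
  proof
    fix y assume "y \<in> boundary_layer V E n T"
    then obtain z where "y \<in> T" "z \<in> gball E n y" "z \<notin> T"
      unfolding boundary_layer_def by auto
    from near_complement_imp_near_edge_boundary[OF assms(1) this]
    show "y \<in> (\<Union>u \<in> fst ` edge_boundary V E T. gball E n u)" by auto
  qed
  then have "real (card (boundary_layer V E n T))
      \<le> real (card (fst ` edge_boundary V E T)) * (D + 1) ^ n"
    using finite_edge_boundary[OF assms(1)] finite_gball[OF assms(1)] card_gball_le[OF assms]
    by (intro card_covered_le) auto
  also have "\<dots> \<le> real (card (edge_boundary V E T)) * (D + 1) ^ n"
    using card_image_le[OF finite_edge_boundary[OF assms(1)]] assms(3)
    by (intro mult_right_mono) auto
  finally show ?thesis .
qed

locale graph_quasi_isometry =
  fixes V :: "'a set" and E :: "'a \<Rightarrow> 'a \<Rightarrow> bool"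
    and W :: "'b set" and F :: "'b \<Rightarrow> 'b \<Rightarrow> bool"
    and D L A :: real and f :: "'a \<Rightarrow> 'b"
  assumes connected_V: "connected_graph V E" and connected_W: "connected_graph W F"
    and degree_V: "degree_bounded V E D" and degree_W: "degree_bounded W F D"
    and L_pos: "0 < L"
    and qi: "quasi_isometry V E W F L A f"
begin

abbreviation "cover_growth \<equiv> (D + 1) ^ nat \<lfloor>A\<rfloor>"
abbreviation "edge_growth \<equiv> (D + 1) ^ nat \<lfloor>L + A\<rfloor>"
abbreviation "fibre_bound \<equiv> (D + 1) ^ nat \<lfloor>L * A\<rfloor>"

lemma graph_V: "fin_graph V E" and graph_W: "fin_graph W F"
  using connected_V connected_W by (simp_all add: connected_graph_def)

lemma D_nonneg: "0 \<le> D"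
proof -
  obtain x where "x \<in> V" using connected_V unfolding connected_graph_def by blast
  then have "real (card {y. E x y}) \<le> D" using degree_V unfolding degree_bounded_def by blast
  then show ?thesis by linarith
qed

lemma f_in_W: "x \<in> V \<Longrightarrow> f x \<in> W"
  using qi unfolding quasi_isometry_def by blast

lemma card_fibre_le: "real (card {x \<in> V. f x = y}) \<le> fibre_bound"
proof (cases "{x \<in> V. f x = y} = {}")
  case True
  then show ?thesis unfolding True using D_nonneg by simp
next
  case False
  then obtain x0 where x0: "x0 \<in> V" "f x0 = y" by blast
  have "{x \<in> V. f x = y} \<subseteq> gball E (nat \<lfloor>L * A\<rfloor>) x0"
  proof
    fix x assume x: "x \<in> {x \<in> V. f x = y}"
    then have "gdist E x0 x / L - A \<le> 0"
      using qi x0 gdist_self[of F y] unfolding quasi_isometry_def by fastforce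
    then have "gdist E x0 x \<le> L * A"
      using L_pos by (simp add: divide_le_eq mult.commute)
    then show "x \<in> gball E (nat \<lfloor>L * A\<rfloor>) x0"
      using gdist_le_imp_in_gball[OF connected_V x0(1)] x by blast
  qed
  then show ?thesis
    using card_mono[OF finite_gball[OF graph_V]] card_gball_le[OF graph_V degree_V D_nonneg]
    by (meson of_nat_le_iff order_trans)
qed

lemma card_preimage_le:
  "finite T \<Longrightarrow> real (card (f -` T \<inter> V)) \<le> real (card T) * fibre_bound"
  using graph_V card_fibre_le unfolding fin_graph_def
  by (intro card_covered_le[where B = "\<lambda>y. {x \<in> V. f x = y}"]) auto

lemma image_point_near:
  assumes "y \<in> W"
  obtains x where "x \<in> V" "f x \<in> gball F (nat \<lfloor>A\<rfloor>) y" "y \<in> gball F (nat \<lfloor>A\<rfloor>) (f x)"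
proof -
  obtain x where x: "x \<in> V" "gdist F y (f x) \<le> A"
    using qi assms unfolding quasi_isometry_def by blast
  then have "f x \<in> gball F (nat \<lfloor>A\<rfloor>) y"
    using gdist_le_imp_in_gball[OF connected_W assms f_in_W] by blast
  moreover have "symp F"
    using graph_W unfolding fin_graph_def by (simp add: symp_def)
  ultimately show ?thesis
    using that[OF x(1)] gball_sym[of F] by blast
qed

lemma card_W_le: "real (card W) \<le> real (card V) * cover_growth"
proof -
  have "W \<subseteq> (\<Union>x\<in>V. gball F (nat \<lfloor>A\<rfloor>) (f x))"
  proof
    fix y assume "y \<in> W"
    then obtain x where "x \<in> V" "y \<in> gball F (nat \<lfloor>A\<rfloor>) (f x)"
      by (rule image_point_near)
    then show "y \<in> (\<Union>x\<in>V. gball F (nat \<lfloor>A\<rfloor>) (f x))" by blast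
  qed
  then show ?thesis
    using graph_V finite_gball[OF graph_W] card_gball_le[OF graph_W degree_W D_nonneg]
    unfolding fin_graph_def by (intro card_covered_le) auto
qed

lemma card_le_boundary_layer_plus_preimage:
  assumes "T \<subseteq> W"
  shows "real (card T) \<le> real (card (boundary_layer W F (nat \<lfloor>A\<rfloor>) T))
    + real (card (f -` T \<inter> V)) * cover_growth"
proof -
  let ?a = "nat \<lfloor>A\<rfloor>"
  have "T - boundary_layer W F ?a T \<subseteq> (\<Union>x \<in> f -` T \<inter> V. gball F ?a (f x))"
  proof
    fix y assume y: "y \<in> T - boundary_layer W F ?a T"
    with assms have "y \<in> W" by blast
    then obtain x where x: "x \<in> V" "f x \<in> gball F ?a y" "y \<in> gball F ?a (f x)"
      by (rule image_point_near)
    then have "f x \<in> T"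
      using y f_in_W unfolding boundary_layer_def by blast
    with x show "y \<in> (\<Union>x \<in> f -` T \<inter> V. gball F ?a (f x))" by blast
  qed
  then have "real (card (T - boundary_layer W F ?a T))
      \<le> real (card (f -` T \<inter> V)) * cover_growth"
    using graph_V finite_gball[OF graph_W] card_gball_le[OF graph_W degree_W D_nonneg]
    unfolding fin_graph_def by (intro card_covered_le) auto
  moreover have "T = boundary_layer W F ?a T \<union> (T - boundary_layer W F ?a T)"
    unfolding boundary_layer_def by blast
  then have "card T \<le> card (boundary_layer W F ?a T) + card (T - boundary_layer W F ?a T)"
    by (metis card_Un_le)
  ultimately show ?thesis by linarith
qed

lemma edge_boundary_preimage_subset:
  "edge_boundary V E (f -` T \<inter> V)
    \<subseteq> (\<Union>x \<in> f -` boundary_layer W F (nat \<lfloor>L + A\<rfloor>) T \<inter> V. Pair x ` {y. E x y})"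
proof
  fix e assume "e \<in> edge_boundary V E (f -` T \<inter> V)"
  then obtain x x' where e: "e = (x, x')" "x \<in> V" "f x \<in> T" "x' \<in> V" "f x' \<notin> T" "E x x'"
    unfolding edge_boundary_def by auto
  have "gdist F (f x) (f x') \<le> L * gdist E x x' + A"
    using qi e unfolding quasi_isometry_def by blast
  moreover have "L * gdist E x x' \<le> L"
    using gdist_le_1_if_edge[of E x x', OF e(6)] L_pos by simp
  ultimately have "f x' \<in> gball F (nat \<lfloor>L + A\<rfloor>) (f x)"
    using gdist_le_imp_in_gball[OF connected_W f_in_W f_in_W] e by simp
  then have "f x \<in> boundary_layer W F (nat \<lfloor>L + A\<rfloor>) T"
    using e f_in_W unfolding boundary_layer_def by blast
  then show "e \<in> (\<Union>x \<in> f -` boundary_layer W F (nat \<lfloor>L + A\<rfloor>) T \<inter> V. Pair x ` {y. E x y})"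
    using e by blast
qed

lemma card_edge_boundary_preimage_le:
  assumes "finite T"
  shows "real (card (edge_boundary V E (f -` T \<inter> V)))
    \<le> real (card (boundary_layer W F (nat \<lfloor>L + A\<rfloor>) T)) * fibre_bound * D"
proof -
  let ?B = "boundary_layer W F (nat \<lfloor>L + A\<rfloor>) T"
  have "finite ?B"
    using assms unfolding boundary_layer_def by simp
  have "real (card (Pair x ` {y. E x y})) \<le> D" for x
    using card_image_le[OF finite_neighbours[OF graph_V], of "Pair x" x]
      card_neighbours_le[OF graph_V degree_V D_nonneg, of x] by linarith
  then have "real (card (edge_boundary V E (f -` T \<inter> V)))
      \<le> real (card (f -` ?B \<inter> V)) * D"
    using graph_V finite_neighbours[OF graph_V] unfolding fin_graph_def
    by (intro card_covered_le[OF edge_boundary_preimage_subset]) auto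
  also have "\<dots> \<le> real (card ?B) * fibre_bound * D"
    using card_preimage_le[OF \<open>finite ?B\<close>] D_nonneg by (rule mult_right_mono)
  finally show ?thesis .
qed

lemma card_le_preimage_if_small_boundary:
  assumes "T \<subseteq> W" and boundary: "real (card (edge_boundary W F T)) \<le> \<eta> * real (card T)"
    and \<eta>: "\<eta> * cover_growth \<le> 1 / 2"
  shows "real (card T) \<le> 2 * cover_growth * real (card (f -` T \<inter> V))"
proof -
  have "0 \<le> cover_growth" using D_nonneg by simp
  have "real (card (boundary_layer W F (nat \<lfloor>A\<rfloor>) T))
      \<le> real (card (edge_boundary W F T)) * cover_growth"
    by (rule card_boundary_layer_le[OF graph_W degree_W D_nonneg])
  also have "\<dots> \<le> \<eta> * real (card T) * cover_growth"
    using boundary \<open>0 \<le> cover_growth\<close> by (rule mult_right_mono)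
  also have "\<dots> = (\<eta> * cover_growth) * real (card T)"
    by (simp add: algebra_simps)
  also have "\<dots> \<le> 1 / 2 * real (card T)"
    using \<eta> by (rule mult_right_mono) simp
  finally show ?thesis
    using card_le_boundary_layer_plus_preimage[OF assms(1)] by (simp add: algebra_simps)
qed

lemma card_edge_boundary_preimage_le_card_preimage:
  assumes "T \<subseteq> W" "0 \<le> \<eta>"
    and boundary: "real (card (edge_boundary W F T)) \<le> \<eta> * real (card T)"
    and "\<eta> * cover_growth \<le> 1 / 2"
  shows "real (card (edge_boundary V E (f -` T \<inter> V)))
    \<le> (2 * \<eta> * D * fibre_bound * edge_growth * cover_growth) * real (card (f -` T \<inter> V))"
proof -
  have "finite T"
    using assms(1) graph_W unfolding fin_graph_def by (auto intro: finite_subset)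
  have "0 \<le> edge_growth * fibre_bound * D"
    using D_nonneg by simp
  let ?S = "f -` T \<inter> V"
  have boundary_bound: "real (card (edge_boundary W F T)) \<le> \<eta> * (2 * cover_growth * real (card ?S))"
    using card_le_preimage_if_small_boundary[OF assms(1) boundary assms(4)] \<open>0 \<le> \<eta>\<close>
    by (rule order_trans[OF boundary mult_left_mono])
  have "real (card (edge_boundary V E ?S))
      \<le> real (card (boundary_layer W F (nat \<lfloor>L + A\<rfloor>) T)) * fibre_bound * D"
    using \<open>finite T\<close> by (rule card_edge_boundary_preimage_le)
  also have "\<dots> \<le> real (card (edge_boundary W F T)) * edge_growth * fibre_bound * D"
    using card_boundary_layer_le[OF graph_W degree_W D_nonneg] D_nonneg
    by (intro mult_right_mono) auto
  also have "\<dots> = real (card (edge_boundary W F T)) * (edge_growth * fibre_bound * D)"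
    by (simp add: mult.assoc)
  also have "\<dots> \<le> \<eta> * (2 * cover_growth * real (card ?S)) * (edge_growth * fibre_bound * D)"
    using boundary_bound \<open>0 \<le> edge_growth * fibre_bound * D\<close> by (rule mult_right_mono)
  also have "\<dots> = (2 * \<eta> * D * fibre_bound * edge_growth * cover_growth) * real (card ?S)"
    by (simp add: algebra_simps)
  finally show ?thesis .
qed

lemma card_preimage_less_if_small:
  assumes "finite T" "0 \<le> \<beta>" "real (card T) < \<beta> * real (card W)"
  shows "real (card (f -` T \<inter> V)) < (\<beta> * fibre_bound * cover_growth) * real (card V)"
proof -
  have "1 \<le> fibre_bound"
    using D_nonneg by simp
  have "real (card (f -` T \<inter> V)) \<le> real (card T) * fibre_bound"
    using assms(1) by (rule card_preimage_le)
  also have "\<dots> < \<beta> * real (card W) * fibre_bound"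
    using assms(3) \<open>1 \<le> fibre_bound\<close> by (simp add: mult_strict_right_mono)
  also have "\<dots> \<le> \<beta> * (real (card V) * cover_growth) * fibre_bound"
    using card_W_le assms(2) \<open>1 \<le> fibre_bound\<close>
    by (intro mult_right_mono mult_left_mono) auto
  also have "\<dots> = (\<beta> * fibre_bound * cover_growth) * real (card V)"
    by (simp add: algebra_simps)
  finally show ?thesis .
qed

lemma folner_preimage:
  assumes "folner_set W F \<eta> T" "small_set W \<beta> T" "0 \<le> \<eta>" "0 \<le> \<beta>"
    and "\<eta> * cover_growth \<le> 1 / 2"
    and "2 * \<eta> * D * fibre_bound * edge_growth * cover_growth \<le> \<epsilon>"
    and "\<beta> * fibre_bound * cover_growth \<le> min \<alpha> (1 / 2)"
  shows "folner_set V E \<epsilon> (f -` T \<inter> V) \<and> small_set V \<alpha> (f -` T \<inter> V)"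
proof -
  let ?S = "f -` T \<inter> V"
  have T: "T \<noteq> {}" "T \<subseteq> W" "real (card (edge_boundary W F T)) \<le> \<eta> * real (card T)"
    and small: "real (card T) < \<beta> * real (card W)"
    using assms(1,2) unfolding folner_set_def small_set_def by auto
  have "finite T"
    using T(2) graph_W unfolding fin_graph_def by (auto intro: finite_subset)
  have "real (card ?S) < (\<beta> * fibre_bound * cover_growth) * real (card V)"
    using \<open>finite T\<close> assms(4) small by (rule card_preimage_less_if_small)
  also have "\<dots> \<le> min \<alpha> (1 / 2) * real (card V)"
    using assms(7) by (rule mult_right_mono) simp
  finally have small_S: "real (card ?S) < \<alpha> * real (card V)" "real (card ?S) < real (card V) / 2"
    by (simp_all add: min_mult_distrib_right)
  have "real (card (edge_boundary V E ?S))
      \<le> (2 * \<eta> * D * fibre_bound * edge_growth * cover_growth) * real (card ?S)"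
    using card_edge_boundary_preimage_le_card_preimage T(2) assms(3) T(3) assms(5) by blast
  also have "\<dots> \<le> \<epsilon> * real (card ?S)"
    using assms(6) by (rule mult_right_mono) simp
  moreover have "?S \<noteq> {}"
    using card_le_preimage_if_small_boundary[OF T(2,3) assms(5)] \<open>finite T\<close> T(1) by auto
  ultimately show ?thesis
    using small_S unfolding folner_set_def small_set_def by auto
qed

end

theorem proposition2p6:
  fixes \<epsilon> \<alpha> D L A :: real
  assumes "\<epsilon> > 0" "\<alpha> > 0" "D > 0" "L > 0" "A > 0"
  shows "\<exists>\<eta> \<beta>. \<eta> > 0 \<and> \<beta> > 0 \<and>
    (\<forall>(V :: nat set) E (W :: nat set) F (f :: nat \<Rightarrow> nat).
       connected_graph V E \<and> connected_graph W F \<and>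
       degree_bounded V E D \<and> degree_bounded W F D \<and>
       \<not> (\<exists>S. folner_set V E \<epsilon> S \<and> small_set V \<alpha> S) \<and>
       quasi_isometry V E W F L A f
       \<longrightarrow> \<not> (\<exists>T. folner_set W F \<eta> T \<and> small_set W \<beta> T))"
proof -
  define Ka Kr M where "Ka = (D + 1) ^ nat \<lfloor>A\<rfloor>" and "Kr = (D + 1) ^ nat \<lfloor>L + A\<rfloor>"
    and "M = (D + 1) ^ nat \<lfloor>L * A\<rfloor>"
  have K: "1 \<le> Ka" "1 \<le> Kr" "1 \<le> M"
    using \<open>D > 0\<close> by (simp_all add: Ka_def Kr_def M_def)
  define \<eta> where "\<eta> = min (1 / (2 * Ka)) (\<epsilon> / (2 * D * M * Kr * Ka))"
  define \<beta> where "\<beta> = min \<alpha> (1 / 2) / (M * Ka)"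
  have "0 < \<eta>" "0 < \<beta>"
    using assms K by (simp_all add: \<eta>_def \<beta>_def)
  have \<eta>_bounds: "\<eta> * Ka \<le> 1 / 2" "2 * \<eta> * D * M * Kr * Ka \<le> \<epsilon>"
    using assms K unfolding \<eta>_def by (auto simp: min_def field_simps)
  have \<beta>_bound: "\<beta> * M * Ka \<le> min \<alpha> (1 / 2)"
    using K unfolding \<beta>_def by simp
  have "\<not> (\<exists>T. folner_set W F \<eta> T \<and> small_set W \<beta> T)"
    if "connected_graph V E" "connected_graph W F" "degree_bounded V E D" "degree_bounded W F D"
      and no_folner: "\<not> (\<exists>S. folner_set V E \<epsilon> S \<and> small_set V \<alpha> S)"
      and "quasi_isometry V E W F L A f"
    for V :: "nat set" and E W F and f :: "nat \<Rightarrow> nat"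
  proof
    interpret graph_quasi_isometry V E W F D L A f
      using that \<open>L > 0\<close> by unfold_locales
    assume "\<exists>T. folner_set W F \<eta> T \<and> small_set W \<beta> T"
    then obtain T where "folner_set W F \<eta> T" "small_set W \<beta> T" by blast
    then have "folner_set V E \<epsilon> (f -` T \<inter> V) \<and> small_set V \<alpha> (f -` T \<inter> V)"
      using \<open>0 < \<eta>\<close> \<open>0 < \<beta>\<close> \<eta>_bounds \<beta>_bound unfolding Ka_def Kr_def M_def
      by (intro folner_preimage) auto
    with no_folner show False by blast
  qed
  with \<open>0 < \<eta>\<close> \<open>0 < \<beta>\<close> show ?thesis by blast
qed

end
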